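(* Let $A\in\mathbb R^{d\times n}$ have orthonormal columns $a_1,\ldots,a_n$, and let $x$ be a random vector in $\mathbb R^n$ such that $\mathbb E[x_ix_jx_kx_\ell]=0$ unless $x_ix_jx_kx_\ell$ is a square, $\mathbb E[x_i^4]=p$ for all $i\in[n]$, and $\mathbb E[x_i^2x_j^2]\le\alpha p$ for all $i\ne j$. Let $T=\mathbb E[(Ax)^{\otimes4}]$, viewed as the $d^2\times d^2$ matrix $\mathbb E[(Ax\otimes Ax)(Ax\otimes Ax)^\top]$. Suppose $u\in\mathbb R^d$ is a unit vector with $\langle u,a_i\rangle^2\ge 0.99$ for some $i\in[n]$. Let $M_u$ be the $d\times d$ reshaping of $T(u\otimes u)$ and let $v$ be its top unit eigenvector. Then $\langle v,a_i\rangle^2\ge 1-16\alpha$.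
   Context: The $d\times d$ reshaping of $w\in\mathbb R^{d^2}$ indexed by pairs $(j,k)$ has $(j,k)$ entry $w_{(j,k)}$; here $M_u=\mathbb E[\langle Ax,u\rangle^2(Ax)(Ax)^\top]$ is symmetric positive semidefinite, so its top eigenvector coincides with its top singular vectors. *)

theory Defs
  imports "HOL-Probability.Probability"
begin

definition is_square_monomial :: "'n \<Rightarrow> 'n \<Rightarrow> 'n \<Rightarrow> 'n \<Rightarrow> bool" where
  "is_square_monomial i j k l \<longleftrightarrow> (\<forall>t. even (length (filter (\<lambda>s. s = t) [i, j, k, l])))"

definition fourth_moment_tensor ::
  "'a measure \<Rightarrow> ('a \<Rightarrow> real ^ 'd) \<Rightarrow> 'd \<Rightarrow> 'd \<Rightarrow> 'd \<Rightarrow> 'd \<Rightarrow> real" where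
  "fourth_moment_tensor M y j k l m =
     (LINT \<omega>|M. y \<omega> $ j * y \<omega> $ k * y \<omega> $ l * y \<omega> $ m)"

text \<open>The d x d reshaping of T (u (x) u), where T is viewed as the d^2 x d^2 matrix
with rows indexed by (j,k) and columns by (l,m).\<close>
definition reshape_T_uu ::
  "('d \<Rightarrow> 'd \<Rightarrow> 'd \<Rightarrow> 'd \<Rightarrow> real) \<Rightarrow> real ^ 'd \<Rightarrow> real ^ 'd ^ 'd" where
  "reshape_T_uu T u = (\<chi> j k. \<Sum>l\<in>UNIV. \<Sum>m\<in>UNIV. T j k l m * u $ l * u $ m)"

definition is_top_unit_eigenvector :: "real ^ 'd ^ 'd \<Rightarrow> real ^ 'd \<Rightarrow> bool" where
  "is_top_unit_eigenvector B v \<longleftrightarrow>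
     norm v = 1 \<and>
     (\<exists>c. B *v v = c *\<^sub>R v \<and>
        (\<forall>\<mu> w. w \<noteq> 0 \<and> B *v w = \<mu> *\<^sub>R w \<longrightarrow> \<mu> \<le> c))"

end

(*
  With y = A x, the quadratic form of M_u is w |-> E[<y,w>^2 <y,u>^2] = E[<x,a>^2 <x,b>^2] with
  a = A^T w and b = A^T u. Since only square monomials have nonzero fourth moments, this
  expectation is a "pairing form" in a and b, built from s j l = E[x_j^2 x_l^2]. On vectors of
  norm at most 1 it is bounded above by p * sum_j a_j^2 b_j^2 + 3 alpha p, while at w = a_i it is
  at least p b_i^2. As M_u is symmetric, its top eigenvalue dominates every Rayleigh quotient, so
  with a = A^T v we get p b_i^2 <= p * sum_j a_j^2 b_j^2 + 3 alpha p. Because b puts weight at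
  least 0.99 on coordinate i, this forces a_i^2 = <v,a_i>^2 >= 1 - 16 alpha.
*)

theory Submission
  imports Defs
begin

lemma is_square_monomial_cases:
  assumes "is_square_monomial j k l m"
  shows "(j = k \<and> l = m) \<or> (j = l \<and> k = m) \<or> (j = m \<and> k = l)"
  using assms[unfolded is_square_monomial_def, THEN spec, of j]
    assms[unfolded is_square_monomial_def, THEN spec, of k]
    assms[unfolded is_square_monomial_def, THEN spec, of l]
  by (auto split: if_splits)

lemma abs_mult_le_mean_squares: "\<bar>a * b\<bar> \<le> (a\<^sup>2 + b\<^sup>2) / 2" for a b :: real
  using sum_squares_bound[of a b] sum_squares_bound[of "-a" b] by (simp add: abs_if)

lemma abs_prod4_le_mean_fourth_powers:
  "\<bar>a * b * c * d\<bar> \<le> (a ^ 4 + b ^ 4 + c ^ 4 + d ^ 4) / 4" for a b c d :: real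
proof -
  have halves: "(a * b)\<^sup>2 \<le> (a ^ 4 + b ^ 4) / 2" "(c * d)\<^sup>2 \<le> (c ^ 4 + d ^ 4) / 2"
    using abs_mult_le_mean_squares[of "a\<^sup>2" "b\<^sup>2"] abs_mult_le_mean_squares[of "c\<^sup>2" "d\<^sup>2"]
    by (simp_all add: power_mult_distrib flip: power_mult)
  have "\<bar>a * b * c * d\<bar> \<le> ((a * b)\<^sup>2 + (c * d)\<^sup>2) / 2"
    using abs_mult_le_mean_squares[of "a * b" "c * d"] by (simp add: mult.assoc)
  also have "\<dots> \<le> (a ^ 4 + b ^ 4 + c ^ 4 + d ^ 4) / 4"
    using halves by simp
  finally show ?thesis .
qed

lemma integrable_prod4:
  fixes y :: "'a \<Rightarrow> real ^ 'n"
  assumes "\<And>j. (\<lambda>\<omega>. y \<omega> $ j) \<in> borel_measurable M"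
    and "\<And>j. integrable M (\<lambda>\<omega>. (y \<omega> $ j) ^ 4)"
  shows "integrable M (\<lambda>\<omega>. y \<omega> $ j * y \<omega> $ k * y \<omega> $ l * y \<omega> $ m)"
proof (rule Bochner_Integration.integrable_bound)
  show "integrable M (\<lambda>\<omega>. ((y \<omega> $ j) ^ 4 + (y \<omega> $ k) ^ 4 + (y \<omega> $ l) ^ 4 + (y \<omega> $ m) ^ 4) / 4)"
    using assms(2) by auto
  show "(\<lambda>\<omega>. y \<omega> $ j * y \<omega> $ k * y \<omega> $ l * y \<omega> $ m) \<in> borel_measurable M"
    using assms(1) by measurable
  show "AE \<omega> in M. norm (y \<omega> $ j * y \<omega> $ k * y \<omega> $ l * y \<omega> $ m)
      \<le> norm (((y \<omega> $ j) ^ 4 + (y \<omega> $ k) ^ 4 + (y \<omega> $ l) ^ 4 + (y \<omega> $ m) ^ 4) / 4)"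
    using abs_prod4_le_mean_fourth_powers by (auto intro!: AE_I2)
qed

lemma
  fixes y :: "'a \<Rightarrow> real ^ 'n"
  assumes ints: "\<And>j k l m. integrable M (\<lambda>\<omega>. y \<omega> $ j * y \<omega> $ k * y \<omega> $ l * y \<omega> $ m)"
  shows integrable_inner_prod4:
      "integrable M (\<lambda>\<omega>. (y \<omega> \<bullet> a) * (y \<omega> \<bullet> b) * (y \<omega> \<bullet> c) * (y \<omega> \<bullet> d))"
    and integral_inner_prod4:
      "(LINT \<omega>|M. (y \<omega> \<bullet> a) * (y \<omega> \<bullet> b) * (y \<omega> \<bullet> c) * (y \<omega> \<bullet> d)) =
        (\<Sum>j\<in>UNIV. \<Sum>k\<in>UNIV. \<Sum>l\<in>UNIV. \<Sum>m\<in>UNIV. a $ j * b $ k * c $ l * d $ m *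
           (LINT \<omega>|M. y \<omega> $ j * y \<omega> $ k * y \<omega> $ l * y \<omega> $ m))"
proof -
  have expand: "(\<lambda>\<omega>. (y \<omega> \<bullet> a) * (y \<omega> \<bullet> b) * (y \<omega> \<bullet> c) * (y \<omega> \<bullet> d)) =
      (\<lambda>\<omega>. \<Sum>j\<in>UNIV. \<Sum>k\<in>UNIV. \<Sum>l\<in>UNIV. \<Sum>m\<in>UNIV. a $ j * b $ k * c $ l * d $ m *
           (y \<omega> $ j * y \<omega> $ k * y \<omega> $ l * y \<omega> $ m))"
  proof -
    have "(y \<omega> \<bullet> a) * (y \<omega> \<bullet> b) * (y \<omega> \<bullet> c) * (y \<omega> \<bullet> d) =
        (\<Sum>j\<in>UNIV. \<Sum>k\<in>UNIV. \<Sum>l\<in>UNIV. \<Sum>m\<in>UNIV.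
           (y \<omega> $ j * a $ j) * (y \<omega> $ k * b $ k) * (y \<omega> $ l * c $ l) * (y \<omega> $ m * d $ m))"
      for \<omega>
      unfolding inner_vec_def inner_real_def
      by (simp only: sum_distrib_left[symmetric] sum_distrib_right[symmetric])
    then show ?thesis by (simp add: mult_ac)
  qed
  show "integrable M (\<lambda>\<omega>. (y \<omega> \<bullet> a) * (y \<omega> \<bullet> b) * (y \<omega> \<bullet> c) * (y \<omega> \<bullet> d))"
    unfolding expand by (intro Bochner_Integration.integrable_sum integrable_mult_right ints)
  show "(LINT \<omega>|M. (y \<omega> \<bullet> a) * (y \<omega> \<bullet> b) * (y \<omega> \<bullet> c) * (y \<omega> \<bullet> d)) =
        (\<Sum>j\<in>UNIV. \<Sum>k\<in>UNIV. \<Sum>l\<in>UNIV. \<Sum>m\<in>UNIV. a $ j * b $ k * c $ l * d $ m *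
           (LINT \<omega>|M. y \<omega> $ j * y \<omega> $ k * y \<omega> $ l * y \<omega> $ m))"
    unfolding expand
    by (simp add: Bochner_Integration.integral_sum Bochner_Integration.integrable_sum
        integrable_mult_right ints)
qed

lemma matrix_vector_mult_nth_eq_inner: "(A *v z) $ j = z \<bullet> A $ j"
  by (simp add: matrix_vector_mult_def inner_vec_def mult.commute)

lemma integrable_matrix_vector_prod4:
  fixes x :: "'a \<Rightarrow> real ^ 'n" and A :: "real ^ 'n ^ 'd"
  assumes "\<And>j k l m. integrable M (\<lambda>\<omega>. x \<omega> $ j * x \<omega> $ k * x \<omega> $ l * x \<omega> $ m)"
  shows "integrable M (\<lambda>\<omega>. (A *v x \<omega>) $ j * (A *v x \<omega>) $ k * (A *v x \<omega>) $ l * (A *v x \<omega>) $ m)"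
  unfolding matrix_vector_mult_nth_eq_inner by (rule integrable_inner_prod4[OF assms])

lemma quadratic_form_reshape_T_uu:
  fixes y :: "'a \<Rightarrow> real ^ 'd"
  assumes ints: "\<And>j k l m. integrable M (\<lambda>\<omega>. y \<omega> $ j * y \<omega> $ k * y \<omega> $ l * y \<omega> $ m)"
  shows "w \<bullet> (reshape_T_uu (fourth_moment_tensor M y) u *v w) =
      (LINT \<omega>|M. (y \<omega> \<bullet> w)\<^sup>2 * (y \<omega> \<bullet> u)\<^sup>2)"
proof -
  have "w \<bullet> (reshape_T_uu (fourth_moment_tensor M y) u *v w) =
      (\<Sum>j\<in>UNIV. \<Sum>k\<in>UNIV. \<Sum>l\<in>UNIV. \<Sum>m\<in>UNIV. w $ j * w $ k * u $ l * u $ m *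
           (LINT \<omega>|M. y \<omega> $ j * y \<omega> $ k * y \<omega> $ l * y \<omega> $ m))"
    by (simp add: inner_vec_def matrix_vector_mult_def reshape_T_uu_def fourth_moment_tensor_def
        sum_distrib_left sum_distrib_right mult_ac)
  also have "\<dots> = (LINT \<omega>|M. (y \<omega> \<bullet> w) * (y \<omega> \<bullet> w) * (y \<omega> \<bullet> u) * (y \<omega> \<bullet> u))"
    by (rule integral_inner_prod4[OF ints, symmetric])
  finally show ?thesis by (simp add: power2_eq_square mult_ac)
qed

lemma transpose_reshape_T_uu_fourth_moment:
  "transpose (reshape_T_uu (fourth_moment_tensor M y) u) = reshape_T_uu (fourth_moment_tensor M y) u"
  by (simp add: vec_eq_iff transpose_def reshape_T_uu_def fourth_moment_tensor_def mult_ac)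

text \<open>The three ways of pairing up \<open>j, k, l, m\<close>; the guards \<open>j \<noteq> k\<close> make the
  diagonal \<open>j = k = l = m\<close> count once.\<close>
definition pairing_moment :: "('n \<Rightarrow> 'n \<Rightarrow> real) \<Rightarrow> 'n \<Rightarrow> 'n \<Rightarrow> 'n \<Rightarrow> 'n \<Rightarrow> real" where
  "pairing_moment s j k l m =
     (if j = k \<and> l = m then s j l else 0) +
     (if j = l \<and> k = m \<and> j \<noteq> k then s j k else 0) +
     (if j = m \<and> k = l \<and> j \<noteq> k then s j k else 0)"

definition pairing_form :: "('n::finite \<Rightarrow> 'n \<Rightarrow> real) \<Rightarrow> real ^ 'n \<Rightarrow> real ^ 'n \<Rightarrow> real" where
  "pairing_form s a b =
     (\<Sum>j\<in>UNIV. \<Sum>l\<in>UNIV. (a $ j)\<^sup>2 * (b $ l)\<^sup>2 * s j l) +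
     2 * (\<Sum>j\<in>UNIV. \<Sum>k\<in>UNIV. if j \<noteq> k then a $ j * b $ j * a $ k * b $ k * s j k else 0)"

lemma fourth_moment_eq_pairings:
  fixes y :: "'a \<Rightarrow> real ^ 'n"
  assumes nonsq: "\<not> is_square_monomial j k l m \<Longrightarrow>
      (LINT \<omega>|M. y \<omega> $ j * y \<omega> $ k * y \<omega> $ l * y \<omega> $ m) = 0"
  defines "s \<equiv> \<lambda>j l. LINT \<omega>|M. (y \<omega> $ j)\<^sup>2 * (y \<omega> $ l)\<^sup>2"
  shows "(LINT \<omega>|M. y \<omega> $ j * y \<omega> $ k * y \<omega> $ l * y \<omega> $ m) = pairing_moment s j k l m"
proof -
  consider "k = j" "m = l" | "l = j" "m = k" "j \<noteq> k" | "m = j" "l = k" "j \<noteq> k"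
    | "\<not> ((j = k \<and> l = m) \<or> (j = l \<and> k = m) \<or> (j = m \<and> k = l))"
    by blast
  then show ?thesis
  proof cases
    case 1
    then show ?thesis by (simp add: pairing_moment_def s_def power2_eq_square mult.assoc)
  next
    case 2
    then show ?thesis by (simp add: pairing_moment_def s_def power2_eq_square mult_ac)
  next
    case 3
    then show ?thesis by (simp add: pairing_moment_def s_def power2_eq_square mult_ac)
  next
    case 4
    then have "\<not> is_square_monomial j k l m" by (rule contrapos_nn) (rule is_square_monomial_cases)
    then have "(LINT \<omega>|M. y \<omega> $ j * y \<omega> $ k * y \<omega> $ l * y \<omega> $ m) = 0" by (rule nonsq)
    moreover have "\<not> (j = k \<and> l = m)" "\<not> (j = l \<and> k = m \<and> j \<noteq> k)" "\<not> (j = m \<and> k = l \<and> j \<noteq> k)"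
      using 4 by blast+
    ultimately show ?thesis by (simp only: pairing_moment_def if_False add_0_right)
  qed
qed

lemma sum_pairings_eq_pairing_form:
  fixes s :: "'n::finite \<Rightarrow> 'n \<Rightarrow> real"
  shows "(\<Sum>j\<in>UNIV. \<Sum>k\<in>UNIV. \<Sum>l\<in>UNIV. \<Sum>m\<in>UNIV.
      a $ j * a $ k * b $ l * b $ m * pairing_moment s j k l m) = pairing_form s a b"
proof -
  let ?f = "\<lambda>j k l m. a $ j * a $ k * b $ l * b $ m"
  let ?cross = "\<Sum>j\<in>UNIV. \<Sum>k\<in>UNIV. if j \<noteq> k then a $ j * b $ j * a $ k * b $ k * s j k else 0"
  have if_sum_const: "(\<Sum>x\<in>A. if P then g x else 0) = (if P then sum g A else 0)"
    for P and g :: "'n \<Rightarrow> real" and A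
    by simp
  \<comment> \<open>Each pairing tests the innermost summation index first, so that \<open>sum.delta\<close> collapses it.\<close>
  have pairing_split: "F * pairing_moment s j k l m =
      (if k = j then if m = l then F * s j l else 0 else 0) +
      (if m = k then if l = j then if j \<noteq> k then F * s j k else 0 else 0 else 0) +
      (if m = j then if l = k then if j \<noteq> k then F * s j k else 0 else 0 else 0)"
    for F :: real and j k l m
    by (auto simp: pairing_moment_def)
  have jk_lm: "(\<Sum>j\<in>UNIV. \<Sum>k\<in>UNIV. \<Sum>l\<in>UNIV. \<Sum>m\<in>UNIV.
      if k = j then if m = l then ?f j k l m * s j l else 0 else 0) =
      (\<Sum>j\<in>UNIV. \<Sum>l\<in>UNIV. (a $ j)\<^sup>2 * (b $ l)\<^sup>2 * s j l)"
    by (simp add: sum.delta if_sum_const power2_eq_square mult_ac)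
  have jl_km: "(\<Sum>j\<in>UNIV. \<Sum>k\<in>UNIV. \<Sum>l\<in>UNIV. \<Sum>m\<in>UNIV.
      if m = k then if l = j then if j \<noteq> k then ?f j k l m * s j k else 0 else 0 else 0) = ?cross"
    by (intro sum.cong refl) (simp add: sum.delta mult_ac)
  have jm_kl: "(\<Sum>j\<in>UNIV. \<Sum>k\<in>UNIV. \<Sum>l\<in>UNIV. \<Sum>m\<in>UNIV.
      if m = j then if l = k then if j \<noteq> k then ?f j k l m * s j k else 0 else 0 else 0) = ?cross"
    by (intro sum.cong refl) (simp add: sum.delta)
  have "(\<Sum>j\<in>UNIV. \<Sum>k\<in>UNIV. \<Sum>l\<in>UNIV. \<Sum>m\<in>UNIV. ?f j k l m * pairing_moment s j k l m) =
      (\<Sum>j\<in>UNIV. \<Sum>k\<in>UNIV. \<Sum>l\<in>UNIV. \<Sum>m\<in>UNIV.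
         if k = j then if m = l then ?f j k l m * s j l else 0 else 0) +
      (\<Sum>j\<in>UNIV. \<Sum>k\<in>UNIV. \<Sum>l\<in>UNIV. \<Sum>m\<in>UNIV.
         if m = k then if l = j then if j \<noteq> k then ?f j k l m * s j k else 0 else 0 else 0) +
      (\<Sum>j\<in>UNIV. \<Sum>k\<in>UNIV. \<Sum>l\<in>UNIV. \<Sum>m\<in>UNIV.
         if m = j then if l = k then if j \<noteq> k then ?f j k l m * s j k else 0 else 0 else 0)"
    unfolding sum.distrib[symmetric] by (intro sum.cong refl) (rule pairing_split)
  then show ?thesis
    unfolding jk_lm jl_km jm_kl pairing_form_def by (simp only: mult_2 add.assoc)
qed

lemma integral_inner_sq_mult_inner_sq:
  fixes y :: "'a \<Rightarrow> real ^ 'n"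
  assumes ints: "\<And>j k l m. integrable M (\<lambda>\<omega>. y \<omega> $ j * y \<omega> $ k * y \<omega> $ l * y \<omega> $ m)"
    and nonsq: "\<And>j k l m. \<not> is_square_monomial j k l m \<Longrightarrow>
      (LINT \<omega>|M. y \<omega> $ j * y \<omega> $ k * y \<omega> $ l * y \<omega> $ m) = 0"
  shows "(LINT \<omega>|M. (y \<omega> \<bullet> a)\<^sup>2 * (y \<omega> \<bullet> b)\<^sup>2) =
      pairing_form (\<lambda>j l. LINT \<omega>|M. (y \<omega> $ j)\<^sup>2 * (y \<omega> $ l)\<^sup>2) a b"
proof -
  have "(LINT \<omega>|M. (y \<omega> \<bullet> a)\<^sup>2 * (y \<omega> \<bullet> b)\<^sup>2) =
      (LINT \<omega>|M. (y \<omega> \<bullet> a) * (y \<omega> \<bullet> a) * (y \<omega> \<bullet> b) * (y \<omega> \<bullet> b))"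
    by (simp add: power2_eq_square mult.assoc)
  also have "\<dots> = (\<Sum>j\<in>UNIV. \<Sum>k\<in>UNIV. \<Sum>l\<in>UNIV. \<Sum>m\<in>UNIV. a $ j * a $ k * b $ l * b $ m *
      (LINT \<omega>|M. y \<omega> $ j * y \<omega> $ k * y \<omega> $ l * y \<omega> $ m))"
    by (rule integral_inner_prod4[OF ints])
  also have "\<dots> = pairing_form (\<lambda>j l. LINT \<omega>|M. (y \<omega> $ j)\<^sup>2 * (y \<omega> $ l)\<^sup>2) a b"
    by (subst fourth_moment_eq_pairings, rule nonsq, assumption) (rule sum_pairings_eq_pairing_form)
  finally show ?thesis .
qed

lemma sum_nth_sq_eq_norm_sq: "(\<Sum>j\<in>UNIV. (a $ j)\<^sup>2) = (norm a)\<^sup>2" for a :: "real ^ 'n"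
  by (simp add: norm_vec_def L2_set_def sum_nonneg)

lemma sum_sq_mult_sq_weighted_le:
  fixes s :: "'n::finite \<Rightarrow> 'n \<Rightarrow> real" and a b :: "real ^ 'n"
  assumes diag: "\<And>j. s j j = p" and off_diag: "\<And>j l. j \<noteq> l \<Longrightarrow> s j l \<le> q" and "0 \<le> q"
    and a: "norm a \<le> 1" and b: "norm b \<le> 1"
  shows "(\<Sum>j\<in>UNIV. \<Sum>l\<in>UNIV. (a $ j)\<^sup>2 * (b $ l)\<^sup>2 * s j l)
      \<le> p * (\<Sum>j\<in>UNIV. (a $ j)\<^sup>2 * (b $ j)\<^sup>2) + q"
proof -
  have "(\<Sum>j\<in>UNIV. \<Sum>l\<in>UNIV. (a $ j)\<^sup>2 * (b $ l)\<^sup>2 * s j l)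
      \<le> (\<Sum>j\<in>UNIV. \<Sum>l\<in>UNIV. (if l = j then (a $ j)\<^sup>2 * (b $ l)\<^sup>2 * p else 0) + (a $ j)\<^sup>2 * (b $ l)\<^sup>2 * q)"
  proof (intro sum_mono)
    fix j l
    show "(a $ j)\<^sup>2 * (b $ l)\<^sup>2 * s j l
        \<le> (if l = j then (a $ j)\<^sup>2 * (b $ l)\<^sup>2 * p else 0) + (a $ j)\<^sup>2 * (b $ l)\<^sup>2 * q"
      using diag off_diag[of j l] \<open>0 \<le> q\<close> by (cases "l = j") (auto intro: mult_left_mono)
  qed
  also have "\<dots> = p * (\<Sum>j\<in>UNIV. (a $ j)\<^sup>2 * (b $ j)\<^sup>2) + q * ((norm a)\<^sup>2 * (norm b)\<^sup>2)"
    by (simp add: sum.distrib sum.delta sum_distrib_left sum_distrib_right mult_ac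
        flip: sum_nth_sq_eq_norm_sq) (rule sum.swap)
  also have "\<dots> \<le> p * (\<Sum>j\<in>UNIV. (a $ j)\<^sup>2 * (b $ j)\<^sup>2) + q"
    using a b \<open>0 \<le> q\<close> by (simp add: mult_left_le power_le_one mult_le_one)
  finally show ?thesis .
qed

lemma cross_pairing_sum_le:
  fixes s :: "'n::finite \<Rightarrow> 'n \<Rightarrow> real" and a b :: "real ^ 'n"
  assumes nonneg: "\<And>j l. 0 \<le> s j l" and off_diag: "\<And>j l. j \<noteq> l \<Longrightarrow> s j l \<le> q"
    and "0 \<le> q" and a: "norm a \<le> 1" and b: "norm b \<le> 1"
  shows "(\<Sum>j\<in>UNIV. \<Sum>k\<in>UNIV. if j \<noteq> k then a $ j * b $ j * a $ k * b $ k * s j k else 0) \<le> q"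
proof -
  define t where "t = (\<Sum>j\<in>UNIV. \<bar>a $ j * b $ j\<bar>)"
  have "t \<le> (\<Sum>j\<in>UNIV. ((a $ j)\<^sup>2 + (b $ j)\<^sup>2) / 2)"
    unfolding t_def by (intro sum_mono abs_mult_le_mean_squares)
  also have "\<dots> = ((norm a)\<^sup>2 + (norm b)\<^sup>2) / 2"
    by (simp add: sum.distrib flip: sum_divide_distrib sum_nth_sq_eq_norm_sq)
  also have "\<dots> \<le> 1"
    using power_le_one[OF norm_ge_zero a, of 2] power_le_one[OF norm_ge_zero b, of 2] by simp
  finally have "t \<le> 1" .
  have "0 \<le> t" unfolding t_def by (simp add: sum_nonneg)
  have "(\<Sum>j\<in>UNIV. \<Sum>k\<in>UNIV. if j \<noteq> k then a $ j * b $ j * a $ k * b $ k * s j k else 0)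
      \<le> (\<Sum>j\<in>UNIV. \<Sum>k\<in>UNIV. q * (\<bar>a $ j * b $ j\<bar> * \<bar>a $ k * b $ k\<bar>))"
  proof (intro sum_mono)
    fix j k
    have "a $ j * b $ j * a $ k * b $ k * s j k \<le> (\<bar>a $ j * b $ j\<bar> * \<bar>a $ k * b $ k\<bar>) * s j k"
      using mult_right_mono[OF abs_ge_self[of "a $ j * b $ j * a $ k * b $ k"] nonneg[of j k]]
      by (simp add: abs_mult mult_ac)
    also have "\<dots> \<le> q * (\<bar>a $ j * b $ j\<bar> * \<bar>a $ k * b $ k\<bar>)" if "j \<noteq> k"
      using mult_left_mono[OF off_diag[OF that], of "\<bar>a $ j * b $ j\<bar> * \<bar>a $ k * b $ k\<bar>"]
      by (simp add: mult.commute)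
    finally show "(if j \<noteq> k then a $ j * b $ j * a $ k * b $ k * s j k else 0)
        \<le> q * (\<bar>a $ j * b $ j\<bar> * \<bar>a $ k * b $ k\<bar>)"
      using \<open>0 \<le> q\<close> by simp
  qed
  also have "\<dots> = q * (t * t)"
    unfolding t_def sum_product by (simp only: sum_distrib_left)
  also have "\<dots> \<le> q"
    using \<open>0 \<le> t\<close> \<open>t \<le> 1\<close> \<open>0 \<le> q\<close> by (simp add: mult_left_le mult_le_one)
  finally show ?thesis .
qed

lemma pairing_form_le:
  fixes s :: "'n::finite \<Rightarrow> 'n \<Rightarrow> real" and a b :: "real ^ 'n"
  assumes "\<And>j. s j j = p" and "\<And>j l. 0 \<le> s j l" and "\<And>j l. j \<noteq> l \<Longrightarrow> s j l \<le> q"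
    and "0 \<le> q" and "norm a \<le> 1" and "norm b \<le> 1"
  shows "pairing_form s a b \<le> p * (\<Sum>j\<in>UNIV. (a $ j)\<^sup>2 * (b $ j)\<^sup>2) + 3 * q"
proof -
  have "(\<Sum>j\<in>UNIV. \<Sum>l\<in>UNIV. (a $ j)\<^sup>2 * (b $ l)\<^sup>2 * s j l)
      \<le> p * (\<Sum>j\<in>UNIV. (a $ j)\<^sup>2 * (b $ j)\<^sup>2) + q"
    by (intro sum_sq_mult_sq_weighted_le assms)
  moreover have "(\<Sum>j\<in>UNIV. \<Sum>k\<in>UNIV. if j \<noteq> k then a $ j * b $ j * a $ k * b $ k * s j k else 0) \<le> q"
    by (intro cross_pairing_sum_le assms)
  ultimately show ?thesis unfolding pairing_form_def by linarith
qed

lemma pairing_form_axis_ge: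
  fixes s :: "'n::finite \<Rightarrow> 'n \<Rightarrow> real" and b :: "real ^ 'n"
  assumes "s i i = p" and nonneg: "\<And>j l. 0 \<le> s j l"
  shows "p * (b $ i)\<^sup>2 \<le> pairing_form s (axis i 1) b"
proof -
  have "p * (b $ i)\<^sup>2 = (b $ i)\<^sup>2 * s i i" using assms(1) by simp
  also have "\<dots> \<le> (\<Sum>l\<in>UNIV. (b $ l)\<^sup>2 * s i l)"
    by (rule member_le_sum) (auto intro: nonneg mult_nonneg_nonneg)
  also have "\<dots> = pairing_form s (axis i 1) b"
  proof -
    have "(\<Sum>l\<in>UNIV. (axis i 1 $ j)\<^sup>2 * (b $ l)\<^sup>2 * s j l) =
        (if j = i then \<Sum>l\<in>UNIV. (b $ l)\<^sup>2 * s i l else 0)" for j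
      by (simp add: axis_def)
    moreover have "(\<Sum>j\<in>UNIV. \<Sum>k\<in>UNIV. if j \<noteq> k
        then axis i 1 $ j * b $ j * axis i 1 $ k * b $ k * s j k else 0) = 0"
      by (intro sum.neutral ballI) (simp add: axis_def)
    ultimately show ?thesis by (simp add: pairing_form_def)
  qed
  finally show ?thesis .
qed

lemma inner_matrix_vector_commute:
  fixes B :: "real ^ 'n ^ 'n"
  assumes "transpose B = B"
  shows "x \<bullet> (B *v y) = y \<bullet> (B *v x)"
  by (metis assms dot_lmul_matrix inner_commute transpose_matrix_vector)

lemma rayleigh_maximizer_is_eigenvector:
  fixes B :: "real ^ 'n ^ 'n"
  assumes sym: "transpose B = B" and w0: "norm w0 = 1"
    and maximal: "\<And>w. norm w = 1 \<Longrightarrow> w \<bullet> (B *v w) \<le> w0 \<bullet> (B *v w0)"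
  shows "B *v w0 = (w0 \<bullet> (B *v w0)) *\<^sub>R w0"
proof -
  define \<rho> where "\<rho> = w0 \<bullet> (B *v w0)"
  have scaled_bound: "z \<bullet> (B *v z) \<le> \<rho> * (norm z)\<^sup>2" for z
  proof (cases "z = 0")
    case False
    define w where "w = (1 / norm z) *\<^sub>R z"
    have "norm w = 1" using False by (simp add: w_def)
    then have "w \<bullet> (B *v w) \<le> \<rho>" using maximal \<rho>_def by simp
    moreover have "w \<bullet> (B *v w) = (z \<bullet> (B *v z)) / (norm z)\<^sup>2"
      by (simp add: w_def matrix_vector_mult_scaleR power2_eq_square)
    ultimately show ?thesis using False by (simp add: divide_le_eq mult.commute)
  qed simp
  \<comment> \<open>Moving \<open>w0\<close> towards the residual \<open>r\<close> would raise the Rayleigh quotient unless \<open>r = 0\<close>.\<close>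
  define r where "r = B *v w0 - \<rho> *\<^sub>R w0"
  define K where "K = r \<bullet> (B *v r) - \<rho> * (r \<bullet> r)"
  have r_inner: "r \<bullet> (B *v w0) - \<rho> * (w0 \<bullet> r) = r \<bullet> r"
    by (simp add: r_def inner_diff_left inner_diff_right inner_commute algebra_simps)
  have perturb: "2 * t * (r \<bullet> r) + t\<^sup>2 * K \<le> 0" for t
  proof -
    have "w0 \<bullet> (B *v r) = r \<bullet> (B *v w0)" by (rule inner_matrix_vector_commute[OF sym])
    then have "(w0 + t *\<^sub>R r) \<bullet> (B *v (w0 + t *\<^sub>R r)) =
        \<rho> + 2 * t * (r \<bullet> (B *v w0)) + t\<^sup>2 * (r \<bullet> (B *v r))"
      by (simp add: matrix_vector_right_distrib matrix_vector_mult_scaleR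
          inner_add_left inner_add_right \<rho>_def power2_eq_square algebra_simps)
    moreover have "(norm (w0 + t *\<^sub>R r))\<^sup>2 = 1 + 2 * t * (w0 \<bullet> r) + t\<^sup>2 * (r \<bullet> r)"
      using w0 unfolding power2_norm_eq_inner
      by (simp add: inner_add_left inner_add_right inner_commute power2_eq_square
          algebra_simps norm_eq_1)
    ultimately show ?thesis
      using scaled_bound[of "w0 + t *\<^sub>R r"] r_inner by (simp add: K_def algebra_simps)
  qed
  have "r \<bullet> r = 0"
  proof (rule ccontr)
    assume "r \<bullet> r \<noteq> 0"
    then have pos: "r \<bullet> r > 0" by (simp add: order_less_le)
    define t where "t = (r \<bullet> r) / (\<bar>K\<bar> + 1)"
    have "t > 0" using pos by (simp add: t_def)
    have "t * \<bar>K\<bar> < r \<bullet> r" using pos unfolding t_def by (simp add: field_simps)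
    then have "t\<^sup>2 * \<bar>K\<bar> < t * (r \<bullet> r)" using \<open>t > 0\<close> by (simp add: power2_eq_square)
    moreover have "- (t\<^sup>2 * \<bar>K\<bar>) \<le> t\<^sup>2 * K"
      using mult_left_mono[of "- \<bar>K\<bar>" K "t\<^sup>2"] abs_ge_minus_self[of K] by simp
    moreover have "0 < t * (r \<bullet> r)" using \<open>t > 0\<close> pos by simp
    moreover have "2 * t * (r \<bullet> r) = 2 * (t * (r \<bullet> r))" by simp
    ultimately show False using perturb[of t] by linarith
  qed
  then show ?thesis by (simp add: r_def \<rho>_def)
qed

lemma rayleigh_quotient_le_top_eigenvalue:
  fixes B :: "real ^ 'n ^ 'n"
  assumes sym: "transpose B = B" and top: "is_top_unit_eigenvector B v" and "norm w = 1"
  shows "w \<bullet> (B *v w) \<le> v \<bullet> (B *v v)"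
proof -
  obtain w0 where "w0 \<in> sphere 0 1"
    and maximal: "\<forall>w\<in>sphere 0 1. w \<bullet> (B *v w) \<le> w0 \<bullet> (B *v w0)"
  proof -
    have "continuous_on (sphere 0 1) (\<lambda>w::real ^ 'n. w \<bullet> (B *v w))"
      by (intro continuous_intros linear_continuous_on matrix_vector_mul_linear)
    moreover have "sphere (0::real ^ 'n) 1 \<noteq> {}" by (simp add: sphere_eq_empty)
    ultimately show ?thesis using that continuous_attains_sup[OF compact_sphere] by blast
  qed
  then have "norm w0 = 1" by simp
  obtain c where "norm v = 1" and v_eigen: "B *v v = c *\<^sub>R v"
    and c_max: "\<And>\<mu> w. w \<noteq> 0 \<Longrightarrow> B *v w = \<mu> *\<^sub>R w \<Longrightarrow> \<mu> \<le> c"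
    using top unfolding is_top_unit_eigenvector_def by blast
  have "B *v w0 = (w0 \<bullet> (B *v w0)) *\<^sub>R w0"
    using rayleigh_maximizer_is_eigenvector[OF sym \<open>norm w0 = 1\<close>] maximal by simp
  moreover have "w0 \<noteq> 0" using \<open>norm w0 = 1\<close> by auto
  ultimately have "w0 \<bullet> (B *v w0) \<le> c" using c_max by blast
  moreover have "c = v \<bullet> (B *v v)" using v_eigen \<open>norm v = 1\<close> by (simp add: norm_eq_1)
  moreover have "w \<bullet> (B *v w) \<le> w0 \<bullet> (B *v w0)" using maximal \<open>norm w = 1\<close> by simp
  ultimately show ?thesis by linarith
qed

lemma norm_transpose_mult_le:
  fixes A :: "real ^ 'n ^ 'd"
  assumes orth: "transpose A ** A = mat 1"
  shows "norm (transpose A *v w) \<le> norm w"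
proof -
  define a where "a = transpose A *v w"
  have proj: "w \<bullet> (A *v a) = a \<bullet> a"
    by (simp add: a_def transpose_matrix_vector flip: dot_lmul_matrix)
  have "(A *v a) v* A = (transpose A ** A) *v a"
    by (simp add: matrix_vector_mul_assoc flip: transpose_matrix_vector)
  then have isometry: "(A *v a) \<bullet> (A *v a) = a \<bullet> a"
    by (simp add: orth flip: dot_lmul_matrix)
  have "0 \<le> (w - A *v a) \<bullet> (w - A *v a)" by simp
  also have "\<dots> = w \<bullet> w - a \<bullet> a"
    using proj isometry by (simp add: inner_diff_left inner_diff_right inner_commute)
  finally show ?thesis
    by (simp add: a_def norm_eq_sqrt_inner real_sqrt_le_mono)
qed

lemma transpose_mult_column:
  fixes A :: "real ^ 'n ^ 'd"
  assumes "transpose A ** A = mat 1"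
  shows "transpose A *v column i A = axis i 1"
proof -
  have "transpose A *v column i A = (transpose A ** A) *v axis i 1"
    by (simp add: vec_eq_iff matrix_vector_mult_def matrix_matrix_mult_def column_def axis_def
        if_distrib[of "\<lambda>x. _ * x"] sum.delta cong: if_cong)
  then show ?thesis using assms by simp
qed

lemma inner_column_eq_nth: "w \<bullet> column i A = (transpose A *v w) $ i"
  by (simp add: inner_vec_def column_def matrix_vector_mult_def transpose_def mult.commute)

lemma norm_column:
  fixes A :: "real ^ 'n ^ 'd"
  assumes "transpose A ** A = mat 1"
  shows "norm (column i A) = 1"
  using transpose_mult_column[OF assms, of i] inner_column_eq_nth[of "column i A" i A]
  by (simp add: norm_eq_1)

lemma sq_nth_ge_of_localized_bound:
  fixes a b :: "real ^ 'n"
  assumes a: "norm a \<le> 1" and b: "norm b \<le> 1" and b_i: "(b $ i)\<^sup>2 \<ge> 0.99"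
    and "0 < p" and "0 \<le> \<alpha>"
    and bound: "p * (b $ i)\<^sup>2 \<le> p * (\<Sum>j\<in>UNIV. (a $ j)\<^sup>2 * (b $ j)\<^sup>2) + 3 * (\<alpha> * p)"
  shows "(a $ i)\<^sup>2 \<ge> 1 - 16 * \<alpha>"
proof -
  have split_i: "(\<Sum>j\<in>UNIV. f j) = f i + (\<Sum>j\<in>UNIV - {i}. f j)" for f :: "'n \<Rightarrow> real"
    by (simp add: sum.remove)
  have sum_a: "(\<Sum>j\<in>UNIV. (a $ j)\<^sup>2) \<le> 1" and sum_b: "(\<Sum>j\<in>UNIV. (b $ j)\<^sup>2) \<le> 1"
    using a b by (simp_all add: sum_nth_sq_eq_norm_sq power_le_one)
  have b_small: "(b $ j)\<^sup>2 \<le> 1 / 100" if "j \<noteq> i" for j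
  proof -
    have "(b $ j)\<^sup>2 \<le> (\<Sum>j\<in>UNIV - {i}. (b $ j)\<^sup>2)" using that by (intro member_le_sum) auto
    moreover have "(b $ i)\<^sup>2 \<ge> 99 / 100" using b_i by simp
    ultimately show ?thesis using sum_b split_i[of "\<lambda>j. (b $ j)\<^sup>2"] by linarith
  qed
  have rest_a: "(\<Sum>j\<in>UNIV - {i}. (a $ j)\<^sup>2) \<le> 1 - (a $ i)\<^sup>2"
    using sum_a split_i[of "\<lambda>j. (a $ j)\<^sup>2"] by linarith
  have "(\<Sum>j\<in>UNIV - {i}. (a $ j)\<^sup>2 * (b $ j)\<^sup>2) \<le> (\<Sum>j\<in>UNIV - {i}. (a $ j)\<^sup>2 * (1 / 100))"
    using b_small by (intro sum_mono mult_left_mono) auto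
  also have "\<dots> = (\<Sum>j\<in>UNIV - {i}. (a $ j)\<^sup>2) / 100"
    by (simp add: sum_divide_distrib)
  also have "\<dots> \<le> (1 - (a $ i)\<^sup>2) / 100"
    using rest_a by simp
  finally have "(\<Sum>j\<in>UNIV. (a $ j)\<^sup>2 * (b $ j)\<^sup>2) \<le> (a $ i)\<^sup>2 * (b $ i)\<^sup>2 + (1 - (a $ i)\<^sup>2) / 100"
    using split_i[of "\<lambda>j. (a $ j)\<^sup>2 * (b $ j)\<^sup>2"] by linarith
  then have "p * (\<Sum>j\<in>UNIV. (a $ j)\<^sup>2 * (b $ j)\<^sup>2) \<le> p * ((a $ i)\<^sup>2 * (b $ i)\<^sup>2 + (1 - (a $ i)\<^sup>2) / 100)"
    using \<open>0 < p\<close> by (intro mult_left_mono) auto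
  then have "p * (b $ i)\<^sup>2 \<le> p * ((a $ i)\<^sup>2 * (b $ i)\<^sup>2 + (1 - (a $ i)\<^sup>2) / 100 + 3 * \<alpha>)"
    using bound by (simp add: algebra_simps)
  then have "(b $ i)\<^sup>2 \<le> (a $ i)\<^sup>2 * (b $ i)\<^sup>2 + (1 - (a $ i)\<^sup>2) / 100 + 3 * \<alpha>"
    using \<open>0 < p\<close> by simp
  then have excess: "((b $ i)\<^sup>2 - 1 / 100) * (1 - (a $ i)\<^sup>2) \<le> 3 * \<alpha>"
    by (simp add: algebra_simps)
  have excess_ge: "98 / 100 * (1 - (a $ i)\<^sup>2) \<le> ((b $ i)\<^sup>2 - 1 / 100) * (1 - (a $ i)\<^sup>2)"
    using b_i rest_a sum_nonneg[of "UNIV - {i}" "\<lambda>j. (a $ j)\<^sup>2"]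
    by (intro mult_right_mono) auto
  have "D \<le> 16 * \<alpha>" if "E \<le> 3 * \<alpha>" and "98 / 100 * D \<le> E" for D E :: real
    using that \<open>0 \<le> \<alpha>\<close> by linarith
  from this[OF excess excess_ge] show ?thesis by simp
qed

lemma quadratic_form_reshape_T_uu_linear_image:
  fixes x :: "'a \<Rightarrow> real ^ 'n" and A :: "real ^ 'n ^ 'd"
  assumes ints: "\<And>j k l m. integrable M (\<lambda>\<omega>. x \<omega> $ j * x \<omega> $ k * x \<omega> $ l * x \<omega> $ m)"
    and nonsq: "\<And>j k l m. \<not> is_square_monomial j k l m \<Longrightarrow>
      (LINT \<omega>|M. x \<omega> $ j * x \<omega> $ k * x \<omega> $ l * x \<omega> $ m) = 0"
  shows "w \<bullet> (reshape_T_uu (fourth_moment_tensor M (\<lambda>\<omega>. A *v x \<omega>)) u *v w) =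
      pairing_form (\<lambda>j l. LINT \<omega>|M. (x \<omega> $ j)\<^sup>2 * (x \<omega> $ l)\<^sup>2) (transpose A *v w) (transpose A *v u)"
proof -
  have "(A *v z) \<bullet> w = z \<bullet> (transpose A *v w)" for z w
    by (metis dot_lmul_matrix inner_commute transpose_matrix_vector)
  then have "w \<bullet> (reshape_T_uu (fourth_moment_tensor M (\<lambda>\<omega>. A *v x \<omega>)) u *v w) =
      (LINT \<omega>|M. (x \<omega> \<bullet> (transpose A *v w))\<^sup>2 * (x \<omega> \<bullet> (transpose A *v u))\<^sup>2)"
    by (simp add: quadratic_form_reshape_T_uu[OF integrable_matrix_vector_prod4[OF ints]])
  also have "\<dots> = pairing_form (\<lambda>j l. LINT \<omega>|M. (x \<omega> $ j)\<^sup>2 * (x \<omega> $ l)\<^sup>2)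
      (transpose A *v w) (transpose A *v u)"
    by (rule integral_inner_sq_mult_inner_sq[OF ints nonsq])
  finally show ?thesis .
qed

lemma top_eigenvector_concentrates:
  fixes B :: "real ^ 'd ^ 'd" and A :: "real ^ 'n ^ 'd" and s :: "'n \<Rightarrow> 'n \<Rightarrow> real"
  assumes sym: "transpose B = B" and top: "is_top_unit_eigenvector B v"
    and orth: "transpose A ** A = mat 1"
    and quad: "\<And>w. w \<bullet> (B *v w) = pairing_form s (transpose A *v w) (transpose A *v u)"
    and s_diag: "\<And>j. s j j = p" and s_nonneg: "\<And>j l. 0 \<le> s j l"
    and s_off_diag: "\<And>j l. j \<noteq> l \<Longrightarrow> s j l \<le> \<alpha> * p"
    and "0 < p" and "0 \<le> \<alpha>" and "norm u = 1" and u_close: "(u \<bullet> column i A)\<^sup>2 \<ge> 0.99"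
  shows "(v \<bullet> column i A)\<^sup>2 \<ge> 1 - 16 * \<alpha>"
proof -
  define a where "a = transpose A *v v"
  define b where "b = transpose A *v u"
  have "norm v = 1" using top by (simp add: is_top_unit_eigenvector_def)
  then have "norm a \<le> 1" "norm b \<le> 1"
    using norm_transpose_mult_le[OF orth, of v] norm_transpose_mult_le[OF orth, of u] \<open>norm u = 1\<close>
    by (simp_all only: a_def b_def)
  have "p * (b $ i)\<^sup>2 \<le> pairing_form s (axis i 1) b"
    by (intro pairing_form_axis_ge s_diag s_nonneg)
  also have "\<dots> = column i A \<bullet> (B *v column i A)"
    by (simp only: quad transpose_mult_column[OF orth] b_def)
  also have "\<dots> \<le> v \<bullet> (B *v v)"
    by (rule rayleigh_quotient_le_top_eigenvalue[OF sym top norm_column[OF orth]])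
  also have "\<dots> \<le> p * (\<Sum>j\<in>UNIV. (a $ j)\<^sup>2 * (b $ j)\<^sup>2) + 3 * (\<alpha> * p)"
    unfolding quad a_def b_def
    using \<open>norm a \<le> 1\<close> \<open>norm b \<le> 1\<close> \<open>0 \<le> \<alpha>\<close> \<open>0 < p\<close>
    by (intro pairing_form_le s_diag s_nonneg s_off_diag) (simp_all add: a_def b_def)
  finally have "(a $ i)\<^sup>2 \<ge> 1 - 16 * \<alpha>"
    using \<open>norm a \<le> 1\<close> \<open>norm b \<le> 1\<close> u_close \<open>0 < p\<close> \<open>0 \<le> \<alpha>\<close>
    by (intro sq_nth_ge_of_localized_bound) (simp_all add: b_def inner_column_eq_nth)
  then show ?thesis by (simp add: a_def inner_column_eq_nth)
qed

theorem mainTheorem12: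
  fixes M :: "'a measure"
    and A :: "real ^ 'n ^ 'd"
    and x :: "'a \<Rightarrow> real ^ 'n"
    and p \<alpha> :: real
    and u v :: "real ^ 'd"
    and i :: 'n
  assumes "prob_space M"
    and orth: "transpose A ** A = mat 1"
    and meas: "\<And>j. (\<lambda>\<omega>. x \<omega> $ j) \<in> borel_measurable M"
    and int4: "\<And>j. integrable M (\<lambda>\<omega>. (x \<omega> $ j) ^ 4)"
    and nonsq: "\<And>j k l m. \<not> is_square_monomial j k l m \<Longrightarrow>
                  (LINT \<omega>|M. x \<omega> $ j * x \<omega> $ k * x \<omega> $ l * x \<omega> $ m) = 0"
    and p_def: "\<And>j. (LINT \<omega>|M. (x \<omega> $ j) ^ 4) = p"
    and cross: "\<And>j k. j \<noteq> k \<Longrightarrow> (LINT \<omega>|M. (x \<omega> $ j)^2 * (x \<omega> $ k)^2) \<le> \<alpha> * p"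
    and p_pos: "p > 0"
    and alpha_nonneg: "\<alpha> \<ge> 0"
    and u_unit: "norm u = 1"
    and u_close: "(u \<bullet> column i A)^2 \<ge> 0.99"
    and v_top: "is_top_unit_eigenvector
                  (reshape_T_uu (fourth_moment_tensor M (\<lambda>\<omega>. A *v x \<omega>)) u) v"
  shows "(v \<bullet> column i A)^2 \<ge> 1 - 16 * \<alpha>"
proof -
  define s where "s = (\<lambda>j l. LINT \<omega>|M. (x \<omega> $ j)\<^sup>2 * (x \<omega> $ l)\<^sup>2)"
  have ints: "integrable M (\<lambda>\<omega>. x \<omega> $ j * x \<omega> $ k * x \<omega> $ l * x \<omega> $ m)" for j k l m
    by (intro integrable_prod4 meas int4)
  show ?thesis
  proof (rule top_eigenvector_concentrates[OF transpose_reshape_T_uu_fourth_moment v_top orth])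
    show "w \<bullet> (reshape_T_uu (fourth_moment_tensor M (\<lambda>\<omega>. A *v x \<omega>)) u *v w) =
        pairing_form s (transpose A *v w) (transpose A *v u)" for w
      unfolding s_def by (rule quadratic_form_reshape_T_uu_linear_image[OF ints nonsq])
    show "s j j = p" for j
      using p_def[of j] by (simp add: s_def power2_eq_square power4_eq_xxxx mult.assoc)
    show "0 \<le> s j l" for j l
      unfolding s_def by (intro integral_nonneg_AE AE_I2) simp
    show "s j l \<le> \<alpha> * p" if "j \<noteq> l" for j l
      using cross[OF that] by (simp add: s_def)
  qed (use p_pos alpha_nonneg u_unit u_close in auto)
qed

end
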